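(* Let $n\in\mathbb{N}$ and $\lambda=(\lambda_1,\dots,\lambda_n)\in\mathbb{R}^n$. Then \[\sum_{P\in\mathcal{P}^0_{ord}(\lambda)}(-1)^{|P|}\varepsilon(P)\varepsilon'(P)=(-1)^n\sum_{p\in\mathcal{P}^0_{\le2}(\lambda)}\varepsilon(p).\]
   Context: Partitions $p=\{I_\alpha\}$ and ordered partitions $P=(I_1,\dots,I_k)$ of $\{1,\dots,n\}$ into nonempty blocks; $|P|=k$. $s_J(\lambda)=\sum_{i\in J}\lambda_i$. $\mathcal{P}_{ord}(\lambda)$: ordered partitions with $s_{I_1}(\lambda)+\dots+s_{I_i}(\lambda)>0$ for all $i$; $\mathcal{P}(\lambda)$: partitions with $s_{I_\alpha}(\lambda)>0$ for every block. $\mathcal{P}^0(n)$: partitions with at most one block of odd cardinality; $\mathcal{P}^0_{ord}(n)$ the ordered partitions whose underlying partition is in $\mathcal{P}^0(n)$; $\mathcal{P}^0_{ord}(\lambda)=\mathcal{P}_{ord}(\lambda)\cap\mathcal{P}^0_{ord}(n)$; $\mathcal{P}^0_{\le2}(\lambda)$ is the set of $p\in\mathcal{P}^0(n)\cap\mathcal{P}(\lambda)$ with all blocks of size $\le 2$. For $P=(I_1,\dots,I_k)$ with $n_i=|I_i|$, $\sigma_P\in\mathfrak{S}_n$ is the unique permutation such that $\sigma_P^{-1}$ maps $\{n_1+\dots+n_i+1,\dots,n_1+\dots+n_{i+1}\}$ increasingly onto $I_{i+1}$ for each $i$; $\varepsilon(P)=\mathrm{sgn}(\sigma_P)$; for $p\in\mathcal{P}^0(n)$,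 $\varepsilon(p)$ is the common value of $\varepsilon(P)$ over orderings $P$ of $p$. $\varepsilon'(P)=(-1)^{\frac12\sum_i|I_i|(|I_i|-1)}$. *)

theory Defs
  imports Complex_Main "HOL-Library.Disjoint_Sets" "HOL-Combinatorics.Permutations"
begin

text \<open>Ground set is {1..n}; lambda is given as a function nat => real (only values on {1..n} matter).
Ordered partitions are lists of blocks, partitions are sets of blocks.\<close>

definition sJ :: "nat set \<Rightarrow> (nat \<Rightarrow> real) \<Rightarrow> real" where
  "sJ J lam = (\<Sum>i\<in>J. lam i)"

definition ordpart :: "nat \<Rightarrow> nat set list set" where
  "ordpart n = {P. partition_on {1..n} (set P) \<and> distinct P}"

definition part :: "nat \<Rightarrow> nat set set set" where
  "part n = {p. partition_on {1..n} p}"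

definition Pord :: "nat \<Rightarrow> (nat \<Rightarrow> real) \<Rightarrow> nat set list set" where
  "Pord n lam = {P \<in> ordpart n. \<forall>i\<in>{1..length P}. sum_list (map (\<lambda>I. sJ I lam) (take i P)) > 0}"

definition Plam :: "nat \<Rightarrow> (nat \<Rightarrow> real) \<Rightarrow> nat set set set" where
  "Plam n lam = {p \<in> part n. \<forall>I\<in>p. sJ I lam > 0}"

definition P0 :: "nat \<Rightarrow> nat set set set" where
  "P0 n = {p \<in> part n. card {I \<in> p. odd (card I)} \<le> 1}"

definition P0ord :: "nat \<Rightarrow> nat set list set" where
  "P0ord n = {P \<in> ordpart n. set P \<in> P0 n}"

definition P0ord_lam :: "nat \<Rightarrow> (nat \<Rightarrow> real) \<Rightarrow> nat set list set" where
  "P0ord_lam n lam = Pord n lam \<inter> P0ord n"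

definition P0le2 :: "nat \<Rightarrow> (nat \<Rightarrow> real) \<Rightarrow> nat set set set" where
  "P0le2 n lam = {p \<in> P0 n \<inter> Plam n lam. \<forall>I\<in>p. card I \<le> 2}"

text \<open>sigma_P sends element x of block I_k to its position
 n_1+...+n_(k-1) + #{y in I_k. y <= x}; identity outside the ground set.
 Then sigma_P^-1 maps the k-th segment increasingly onto I_k.\<close>
definition sigmaP :: "nat set list \<Rightarrow> nat \<Rightarrow> nat" where
  "sigmaP P x = (if x \<in> \<Union>(set P) then
      (let k = (THE k. k < length P \<and> x \<in> P ! k) in
        (\<Sum>j<k. card (P ! j)) + card {y \<in> P ! k. y \<le> x})
    else x)"

definition epsP :: "nat set list \<Rightarrow> int" where
  "epsP P = sign (sigmaP P)"

text \<open>epsilon(p): the value of epsilon on an ordering of p (common value for p in P^0(n)).\<close>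
definition eps_part :: "nat \<Rightarrow> nat set set \<Rightarrow> int" where
  "eps_part n p = epsP (SOME P. P \<in> ordpart n \<and> set P = p)"

definition eps' :: "nat set list \<Rightarrow> int" where
  "eps' P = (-1) ^ ((\<Sum>I\<leftarrow>P. card I * (card I - 1)) div 2)"

end

theory Submission
  imports Defs
begin

text \<open>
  The sign \<open>\<epsilon>(P)\<close> of \<open>\<sigma>\<^sub>P\<close> is computed from its inversions, which are the pairs \<open>b < a\<close> with
  \<open>a\<close> in an earlier block than \<open>b\<close>. Moving a block of size \<open>c\<close> past blocks of total size \<open>m\<close>
  multiplies it by \<open>(-1) ^ (c * m)\<close>, so on partitions with at most one odd block \<open>\<epsilon>\<close> depends only
  on the underlying partition.

  Both sides are then compared by induction on the ground set \<open>S\<close>, keeping track of the number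
  \<open>k \<le> 1\<close> of odd blocks. For nonempty \<open>S\<close> both vanish unless \<open>\<lambda>(S) > 0\<close>. Then splitting off the last
  block \<open>I\<close> of an ordered partition shows that the left-hand side satisfies a recursion over the
  nonempty \<open>I \<subseteq> S\<close> with coefficients \<open>(-1) ^ crossings (S - I) I * \<epsilon>'(I)\<close>, where
  \<open>crossings A B\<close> counts the pairs \<open>a \<in> A\<close>, \<open>b \<in> B\<close> with \<open>b < a\<close>. The right-hand side satisfies
  the same recursion: expanding \<open>\<epsilon>'(I)\<close> as a signed sum over the partitions of \<open>I\<close> into pairs
  and at most one singleton (a Pfaffian identity) turns the convolution into a sum over such
  partitions \<open>p\<close> of \<open>S\<close> of \<open>\<epsilon>(p)\<close> times an alternating sum over the subsets of \<open>p\<close> that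
  contain every block with non-positive \<open>\<lambda>\<close>-sum. Some block of \<open>p\<close> has positive sum, and
  toggling it makes the alternating sum vanish.
\<close>

section \<open>The sign of a permutation via inversions\<close>

definition inversions_on :: "nat set \<Rightarrow> (nat \<Rightarrow> nat) \<Rightarrow> (nat \<times> nat) set" where
  "inversions_on A p = {(x, y). x \<in> A \<and> y \<in> A \<and> x < y \<and> p y < p x}"

lemma finite_inversions_on: "finite A \<Longrightarrow> finite (inversions_on A p)"
  unfolding inversions_on_def by (rule finite_subset[of _ "A \<times> A"]) auto

lemma card_inversions_on_compose_adjacent_transpose:
  assumes "p permutes A" "finite A" "i \<in> A" "Suc i \<in> A"
  shows "(-1::int) ^ card (inversions_on A (p \<circ> transpose i (Suc i)))
           = - ((-1) ^ card (inversions_on A p))"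
proof -
  define t where "t = transpose i (Suc i)"
  define d where "d = (i, Suc i)"
  have tt: "t \<circ> t = id" by (simp add: t_def fun_eq_iff)
  have moved: "map_prod t t ` (inversions_on A q - {d}) \<subseteq> inversions_on A (q \<circ> t) - {d}" for q
  proof
    fix z assume "z \<in> map_prod t t ` (inversions_on A q - {d})"
    then obtain x y where z: "z = (t x, t y)" and xy: "(x, y) \<in> inversions_on A q" "(x, y) \<noteq> d"
      by auto
    \<comment> \<open>t preserves the order of every pair except d\<close>
    have "t x < t y" "(t x, t y) \<noteq> d"
      using xy by (auto simp: t_def d_def inversions_on_def transpose_def)
    moreover have "t x \<in> A" "t y \<in> A" using xy assms(3,4) by (auto simp: t_def inversions_on_def transpose_def)
    ultimately show "z \<in> inversions_on A (q \<circ> t) - {d}"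
      using xy tt unfolding z inversions_on_def by (auto simp: pointfree_idE)
  qed
  have "inversions_on A (p \<circ> t) - {d} = map_prod t t ` (inversions_on A p - {d})"
  proof
    have "inversions_on A (p \<circ> t) - {d} = map_prod t t ` map_prod t t ` (inversions_on A (p \<circ> t) - {d})"
      using tt by (simp add: image_comp map_prod.comp map_prod.id)
    also have "\<dots> \<subseteq> map_prod t t ` (inversions_on A p - {d})"
      using moved[of "p \<circ> t"] tt by (intro image_mono) (simp add: comp_assoc)
    finally show "inversions_on A (p \<circ> t) - {d} \<subseteq> \<dots>" .
  qed (rule moved)
  moreover have "inj (map_prod t t)" by (simp add: t_def prod.inj_map)
  ultimately have same: "card (inversions_on A (p \<circ> t) - {d}) = card (inversions_on A p - {d})"
    by (simp add: card_image inj_on_subset)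
  have "p i \<noteq> p (Suc i)" using permutes_inj[OF assms(1)] by (simp add: inj_eq)
  then have "d \<in> inversions_on A (p \<circ> t) \<longleftrightarrow> d \<notin> inversions_on A p"
    using assms(3,4) by (auto simp: inversions_on_def d_def t_def)
  moreover have remove_d: "card (inversions_on A q) = Suc (card (inversions_on A q - {d}))"
    if "d \<in> inversions_on A q" for q
    using that card.remove[OF finite_inversions_on[OF assms(2)]] by blast
  ultimately have "card (inversions_on A (p \<circ> t)) + card (inversions_on A p)
                     = Suc (2 * card (inversions_on A p - {d}))"
    using same by (cases "d \<in> inversions_on A p") (simp_all add: remove_d del: card_Diff_insert)
  then have "odd (card (inversions_on A (p \<circ> t)) + card (inversions_on A p))" by presburger
  then show ?thesis unfolding t_def by (auto simp: minus_one_power_iff)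
qed

lemma card_inversions_on_compose_adj_transps:
  assumes "p permutes A" "finite A" "\<forall>x\<in>set xs. x \<in> A \<and> Suc x \<in> A"
  shows "(-1::int) ^ card (inversions_on A (p \<circ> apply_adj_transps xs))
           = (-1) ^ length xs * (-1) ^ card (inversions_on A p)"
  using assms
proof (induction xs arbitrary: p)
  case (Cons x xs)
  let ?t = "transpose x (Suc x)"
  have "p \<circ> ?t permutes A"
    using Cons.prems by (intro permutes_compose permutes_swap_id) auto
  then have "(-1::int) ^ card (inversions_on A ((p \<circ> ?t) \<circ> apply_adj_transps xs))
               = (-1) ^ length xs * (-1) ^ card (inversions_on A (p \<circ> ?t))"
    by (rule Cons.IH) (use Cons.prems in auto)
  also have "\<dots> = (-1) ^ length (x # xs) * (-1) ^ card (inversions_on A p)"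
    using card_inversions_on_compose_adjacent_transpose[of p A x] Cons.prems by simp
  also have "(p \<circ> ?t) \<circ> apply_adj_transps xs = p \<circ> apply_adj_transps (x # xs)"
    by (simp add: comp_assoc)
  finally show ?case .
qed simp

lemma sign_eq_card_inversions_on:
  assumes "p permutes {m..n::nat}"
  shows "sign p = (-1) ^ card (inversions_on {m..n} p)"
  using finite_atLeastAtMost assms
proof (induction rule: permutes_rev_induct)
  case id
  have "inversions_on {m..n} (\<lambda>x. x) = {}" by (auto simp: inversions_on_def)
  then show ?case by simp
next
  case (swap a b p)
  have flip: "(-1::int) ^ card (inversions_on {m..n} (p \<circ> transpose a b))
                = - ((-1) ^ card (inversions_on {m..n} p))"
    if "a < b" "a \<in> {m..n}" "b \<in> {m..n}" for a b
  proof -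
    have "(-1::int) ^ card (inversions_on {m..n} (p \<circ> apply_adj_transps (adj_transp_seq a b)))
            = (-1) ^ length (adj_transp_seq a b) * (-1) ^ card (inversions_on {m..n} p)"
      using that swap.hyps(4)
      by (intro card_inversions_on_compose_adj_transps) (auto simp: set_adj_transp_seq)
    moreover have "odd (length (adj_transp_seq a b))"
      using that by (simp add: length_adj_transp_seq)
    ultimately show ?thesis using that by (simp add: adj_transp_seq_correct)
  qed
  have "(-1::int) ^ card (inversions_on {m..n} (p \<circ> transpose a b))
          = - ((-1) ^ card (inversions_on {m..n} p))"
    using flip[of a b] flip[of b a] swap.hyps(1-3) by (cases a b rule: linorder_cases) (auto simp: transpose_commute)
  moreover have "sign (p \<circ> transpose a b) = - sign p"
    using swap by (subst sign_compose) (auto simp: sign_swap_id permutation_permutes intro: permutes_swap_id)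
  ultimately show ?case using swap.IH by (simp only:)
qed

section \<open>The sign of an ordered partition\<close>

definition wf_blocks :: "nat set list \<Rightarrow> bool" where
  "wf_blocks P \<longleftrightarrow> distinct P \<and> disjoint (set P) \<and> (\<forall>I\<in>set P. finite I)"

definition block_index :: "nat set list \<Rightarrow> nat \<Rightarrow> nat" where
  "block_index P x = (THE k. k < length P \<and> x \<in> P ! k)"

definition block_offset :: "nat set list \<Rightarrow> nat \<Rightarrow> nat" where
  "block_offset P k = (\<Sum>j<k. card (P ! j))"

definition rank_in :: "nat set \<Rightarrow> nat \<Rightarrow> nat" where
  "rank_in A x = card {y \<in> A. y \<le> x}"

lemma wf_blocks_nth_disjoint:
  assumes "wf_blocks P" "k < length P" "l < length P" "k \<noteq> l"
  shows "P ! k \<inter> P ! l = {}"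
proof -
  have "P ! k \<noteq> P ! l" using assms nth_eq_iff_index_eq unfolding wf_blocks_def by blast
  moreover have "P ! k \<in> set P" "P ! l \<in> set P" using assms by auto
  ultimately show ?thesis using assms(1) unfolding wf_blocks_def pairwise_def disjnt_def by blast
qed

lemma block_index_eq:
  assumes "wf_blocks P" "k < length P" "x \<in> P ! k"
  shows "block_index P x = k"
  unfolding block_index_def
proof (rule the_equality)
  show "k < length P \<and> x \<in> P ! k" using assms by simp
  fix l assume "l < length P \<and> x \<in> P ! l"
  then show "l = k" using wf_blocks_nth_disjoint[OF assms(1), of k l] assms by blast
qed

lemma block_index_in:
  assumes "wf_blocks P" "x \<in> \<Union>(set P)"
  shows "block_index P x < length P" "x \<in> P ! block_index P x"
proof -
  obtain k where k: "k < length P" "x \<in> P ! k" using assms(2) by (auto simp: in_set_conv_nth)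
  then show "block_index P x < length P" "x \<in> P ! block_index P x"
    using block_index_eq[OF assms(1) k] by auto
qed

lemma finite_nth_block_index:
  "wf_blocks P \<Longrightarrow> x \<in> \<Union>(set P) \<Longrightarrow> finite (P ! block_index P x)"
  using block_index_in unfolding wf_blocks_def by (metis nth_mem)

lemma sigmaP_eq_offset_rank:
  assumes "x \<in> \<Union>(set P)"
  shows "sigmaP P x = block_offset P (block_index P x) + rank_in (P ! block_index P x) x"
  using assms unfolding sigmaP_def block_offset_def rank_in_def block_index_def Let_def by simp

lemma block_offset_Suc: "block_offset P (Suc k) = block_offset P k + card (P ! k)"
  by (simp add: block_offset_def)

lemma block_offset_mono: "k \<le> l \<Longrightarrow> block_offset P k \<le> block_offset P l"
  unfolding block_offset_def by (rule sum_mono2) auto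

lemma block_offset_length:
  assumes "wf_blocks P"
  shows "block_offset P (length P) = card (\<Union>(set P))"
proof -
  have "card (\<Union>(set P)) = sum card (set P)"
    using assms unfolding wf_blocks_def by (intro card_Union_disjoint) auto
  also have "\<dots> = sum_list (map card P)"
    using assms unfolding wf_blocks_def by (simp add: sum.distinct_set_conv_list)
  also have "\<dots> = block_offset P (length P)"
    by (simp add: sum_list_sum_nth block_offset_def atLeast0LessThan)
  finally show ?thesis by simp
qed

lemma rank_in_le_card: "finite A \<Longrightarrow> rank_in A x \<le> card A"
  unfolding rank_in_def by (rule card_mono) auto

lemma rank_in_pos: "finite A \<Longrightarrow> x \<in> A \<Longrightarrow> 0 < rank_in A x"
  unfolding rank_in_def by (subst card_gt_0_iff) auto

lemma rank_in_strict_mono: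
  assumes "finite A" "y \<in> A" "x < y"
  shows "rank_in A x < rank_in A y"
proof -
  have "{z \<in> A. z \<le> x} \<subseteq> {z \<in> A. z \<le> y}" "y \<in> {z \<in> A. z \<le> y} - {z \<in> A. z \<le> x}"
    using assms by auto
  then have "{z \<in> A. z \<le> x} \<subset> {z \<in> A. z \<le> y}" by blast
  then show ?thesis unfolding rank_in_def using assms(1) by (simp add: psubset_card_mono)
qed

lemma sigmaP_bounds:
  assumes "wf_blocks P" "x \<in> \<Union>(set P)"
  shows "block_offset P (block_index P x) < sigmaP P x"
    and "sigmaP P x \<le> block_offset P (Suc (block_index P x))"
  using sigmaP_eq_offset_rank[OF assms(2)] block_offset_Suc[of P "block_index P x"]
    rank_in_pos[OF finite_nth_block_index[OF assms] block_index_in(2)[OF assms]]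
    rank_in_le_card[OF finite_nth_block_index[OF assms], of x]
  by auto

lemma sigmaP_less:
  assumes "wf_blocks P" "x \<in> \<Union>(set P)" "y \<in> \<Union>(set P)"
    and "block_index P x < block_index P y \<or> block_index P x = block_index P y \<and> x < y"
  shows "sigmaP P x < sigmaP P y"
  using assms(4)
proof
  assume "block_index P x < block_index P y"
  then have "block_offset P (Suc (block_index P x)) \<le> block_offset P (block_index P y)"
    by (intro block_offset_mono) simp
  then show ?thesis using sigmaP_bounds[OF assms(1,2)] sigmaP_bounds[OF assms(1,3)] by linarith
next
  assume "block_index P x = block_index P y \<and> x < y"
  then show ?thesis
    using sigmaP_eq_offset_rank[OF assms(2)] sigmaP_eq_offset_rank[OF assms(3)]
      rank_in_strict_mono[OF finite_nth_block_index[OF assms(1,3)] block_index_in(2)[OF assms(1,3)]]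
    by simp
qed

lemma sigmaP_less_iff:
  assumes "wf_blocks P" "x \<in> \<Union>(set P)" "y \<in> \<Union>(set P)" "x < y"
  shows "sigmaP P y < sigmaP P x \<longleftrightarrow> block_index P y < block_index P x"
  using sigmaP_less[OF assms(1,2,3)] sigmaP_less[OF assms(1,3,2)] assms(4)
  by (metis less_asym linorder_neqE_nat)

lemma sigmaP_permutes:
  assumes "wf_blocks P" "\<Union>(set P) = {1..n}"
  shows "sigmaP P permutes {1..n}"
proof (rule bij_imp_permutes)
  have maps_to: "sigmaP P x \<in> {1..n}" if "x \<in> {1..n}" for x
  proof -
    have x: "x \<in> \<Union>(set P)" using that assms(2) by simp
    have "sigmaP P x \<le> block_offset P (Suc (block_index P x))"
      using sigmaP_bounds(2)[OF assms(1) x] .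
    also have "\<dots> \<le> block_offset P (length P)"
      using block_index_in(1)[OF assms(1) x] by (intro block_offset_mono) simp
    finally show ?thesis
      using sigmaP_bounds(1)[OF assms(1) x] block_offset_length[OF assms(1)] assms(2) by simp
  qed
  have inj: "inj_on (sigmaP P) {1..n}"
  proof (rule inj_onI)
    fix x y assume "x \<in> {1..n}" "y \<in> {1..n}" "sigmaP P x = sigmaP P y"
    then show "x = y"
      using sigmaP_less[OF assms(1), of x y] sigmaP_less[OF assms(1), of y x] assms(2)
      by (metis less_irrefl linorder_neqE_nat)
  qed
  then have "sigmaP P ` {1..n} = {1..n}" using maps_to by (intro endo_inj_surj) auto
  then show "bij_betw (sigmaP P) {1..n} {1..n}" using inj by (simp add: bij_betw_def)
next
  fix x assume "x \<notin> {1..n}"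
  then have "x \<notin> \<Union>(set P)" using assms(2) by simp
  then show "sigmaP P x = x" unfolding sigmaP_def by (rule if_not_P)
qed

lemma inversions_on_sigmaP:
  assumes "wf_blocks P" "\<Union>(set P) = {1..n}"
  shows "inversions_on {1..n} (sigmaP P) = inversions_on {1..n} (block_index P)"
  unfolding inversions_on_def using sigmaP_less_iff[OF assms(1)] assms(2) by auto

definition crossings :: "nat set \<Rightarrow> nat set \<Rightarrow> nat" where
  "crossings A B = card {(a, b). a \<in> A \<and> b \<in> B \<and> b < a}"

fun block_sign :: "nat set list \<Rightarrow> int" where
  "block_sign [] = 1"
| "block_sign (I # P) = (-1) ^ crossings I (\<Union>(set P)) * block_sign P"

lemma wf_blocks_Cons: "wf_blocks (I # Q) \<Longrightarrow> wf_blocks Q"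
  unfolding wf_blocks_def by (auto simp: pairwise_insert)

lemma wf_blocks_Cons_disjoint: "wf_blocks (I # Q) \<Longrightarrow> I \<inter> \<Union>(set Q) = {}"
  unfolding wf_blocks_def pairwise_def disjnt_def by auto

lemma inversions_on_block_index_Cons:
  assumes "wf_blocks (I # Q)"
  shows "inversions_on (\<Union>(set (I # Q))) (block_index (I # Q))
           = prod.swap ` {(a, b). a \<in> I \<and> b \<in> \<Union>(set Q) \<and> b < a}
             \<union> inversions_on (\<Union>(set Q)) (block_index Q)"
proof -
  have head: "block_index (I # Q) y = 0" if "y \<in> I" for y
    using block_index_eq[OF assms, of 0 y] that by simp
  have tail: "block_index (I # Q) y = Suc (block_index Q y)" if "y \<in> \<Union>(set Q)" for y
    using block_index_eq[OF assms, of "Suc (block_index Q y)" y]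
      block_index_in[OF wf_blocks_Cons[OF assms] that] by simp
  show ?thesis
  proof (intro set_eqI iffI)
    fix z assume "z \<in> inversions_on (\<Union>(set (I # Q))) (block_index (I # Q))"
    then obtain x y where z: "z = (x, y)" "x < y" and y: "y \<in> I \<union> \<Union>(set Q)"
      and x: "x \<in> I \<union> \<Union>(set Q)" and lt: "block_index (I # Q) y < block_index (I # Q) x"
      unfolding inversions_on_def by auto
    then have "x \<in> \<Union>(set Q)" using head by fastforce
    then show "z \<in> prod.swap ` {(a, b). a \<in> I \<and> b \<in> \<Union>(set Q) \<and> b < a}
                 \<union> inversions_on (\<Union>(set Q)) (block_index Q)"
      using z y lt tail wf_blocks_Cons_disjoint[OF assms]
      by (cases "y \<in> I") (auto simp: inversions_on_def image_iff)
  next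
    fix z assume "z \<in> prod.swap ` {(a, b). a \<in> I \<and> b \<in> \<Union>(set Q) \<and> b < a}
                    \<union> inversions_on (\<Union>(set Q)) (block_index Q)"
    then show "z \<in> inversions_on (\<Union>(set (I # Q))) (block_index (I # Q))"
      using head unfolding inversions_on_def by (auto simp: tail[OF UnionI])
  qed
qed

lemma block_sign_eq_card_inversions_on:
  assumes "wf_blocks P"
  shows "block_sign P = (-1) ^ card (inversions_on (\<Union>(set P)) (block_index P))"
  using assms
proof (induction P)
  case Nil
  then show ?case by (simp add: inversions_on_def)
next
  case (Cons I Q)
  let ?C = "{(a, b). a \<in> I \<and> b \<in> \<Union>(set Q) \<and> b < a}"
  have wQ: "wf_blocks Q" using wf_blocks_Cons[OF Cons.prems] .
  have fin: "finite I" "finite (\<Union>(set Q))" using Cons.prems unfolding wf_blocks_def by auto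
  have "finite ?C" by (rule finite_subset[of _ "I \<times> \<Union>(set Q)"]) (use fin in auto)
  moreover have "finite (inversions_on (\<Union>(set Q)) (block_index Q))"
    using finite_inversions_on fin(2) .
  moreover have "prod.swap ` ?C \<inter> inversions_on (\<Union>(set Q)) (block_index Q) = {}"
    using wf_blocks_Cons_disjoint[OF Cons.prems] unfolding inversions_on_def by auto
  ultimately have "card (inversions_on (\<Union>(set (I # Q))) (block_index (I # Q)))
                     = crossings I (\<Union>(set Q)) + card (inversions_on (\<Union>(set Q)) (block_index Q))"
    unfolding inversions_on_block_index_Cons[OF Cons.prems] crossings_def
    by (simp add: card_Un_disjoint card_image)
  then show ?case using Cons.IH[OF wQ] by (simp add: power_add)
qed

lemma epsP_eq_block_sign:
  assumes "wf_blocks P" "\<Union>(set P) = {1..n}"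
  shows "epsP P = block_sign P"
  unfolding epsP_def sign_eq_card_inversions_on[OF sigmaP_permutes[OF assms]]
    inversions_on_sigmaP[OF assms] block_sign_eq_card_inversions_on[OF assms(1)] assms(2) ..

section \<open>Reordering blocks\<close>

lemma finite_crossing_pairs: "finite A \<Longrightarrow> finite B \<Longrightarrow> finite {(a, b). a \<in> A \<and> b \<in> B \<and> b < a}"
  by (rule finite_subset[of _ "A \<times> B"]) auto

lemma crossings_Un_right:
  assumes "finite A" "finite B" "finite C" "B \<inter> C = {}"
  shows "crossings A (B \<union> C) = crossings A B + crossings A C"
proof -
  have "{(a, b). a \<in> A \<and> b \<in> B \<union> C \<and> b < a} =
        {(a, b). a \<in> A \<and> b \<in> B \<and> b < a} \<union> {(a, b). a \<in> A \<and> b \<in> C \<and> b < a}" by auto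
  moreover have "{(a, b). a \<in> A \<and> b \<in> B \<and> b < a} \<inter> {(a, b). a \<in> A \<and> b \<in> C \<and> b < a} = {}"
    using assms(4) by auto
  ultimately show ?thesis
    unfolding crossings_def using assms by (simp add: card_Un_disjoint finite_crossing_pairs)
qed

lemma crossings_Un_left:
  assumes "finite A" "finite B" "finite C" "A \<inter> B = {}"
  shows "crossings (A \<union> B) C = crossings A C + crossings B C"
proof -
  have "{(a, b). a \<in> A \<union> B \<and> b \<in> C \<and> b < a} =
        {(a, b). a \<in> A \<and> b \<in> C \<and> b < a} \<union> {(a, b). a \<in> B \<and> b \<in> C \<and> b < a}" by auto
  moreover have "{(a, b). a \<in> A \<and> b \<in> C \<and> b < a} \<inter> {(a, b). a \<in> B \<and> b \<in> C \<and> b < a} = {}"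
    using assms(4) by auto
  ultimately show ?thesis
    unfolding crossings_def using assms by (simp add: card_Un_disjoint finite_crossing_pairs)
qed

lemma crossings_empty [simp]: "crossings {} A = 0" "crossings A {} = 0"
  unfolding crossings_def by simp_all

lemma crossings_add_swap:
  assumes "finite A" "finite B" "A \<inter> B = {}"
  shows "crossings A B + crossings B A = card A * card B"
proof -
  let ?C = "{(a, b). a \<in> A \<and> b \<in> B \<and> b < a}" and ?C' = "{(b, a). b \<in> B \<and> a \<in> A \<and> a < b}"
  have "A \<times> B = ?C \<union> prod.swap ` ?C'"
    using assms(3) by (auto simp: image_iff linorder_neq_iff)
  moreover have "?C \<inter> prod.swap ` ?C' = {}" by auto
  ultimately have "card (A \<times> B) = card ?C + card ?C'"
    using assms(1,2) finite_crossing_pairs[OF assms(2,1)]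
    by (simp add: card_Un_disjoint finite_crossing_pairs card_image)
  then show ?thesis unfolding crossings_def by (simp add: card_cartesian_product)
qed

lemma wf_blocks_append:
  assumes "wf_blocks (P @ Q)"
  shows "wf_blocks P" "wf_blocks Q" "\<Union>(set P) \<inter> \<Union>(set Q) = {}"
proof -
  have dist: "distinct (P @ Q)" and disj: "disjoint (set (P @ Q))"
    and fin: "\<forall>I\<in>set (P @ Q). finite I"
    using assms unfolding wf_blocks_def by auto
  have "disjoint (set P)" "disjoint (set Q)" by (rule pairwise_subset[OF disj], simp)+
  then show "wf_blocks P" "wf_blocks Q" using dist fin unfolding wf_blocks_def by auto
  show "\<Union>(set P) \<inter> \<Union>(set Q) = {}"
  proof (rule ccontr)
    assume "\<Union>(set P) \<inter> \<Union>(set Q) \<noteq> {}"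
    then obtain x X Y where "X \<in> set P" "Y \<in> set Q" "x \<in> X" "x \<in> Y" by blast
    moreover have "X \<noteq> Y" using dist calculation by auto
    ultimately show False using disj unfolding pairwise_def disjnt_def by auto
  qed
qed

lemma finite_Union_blocks: "wf_blocks P \<Longrightarrow> finite (\<Union>(set P))"
  unfolding wf_blocks_def by auto

lemma block_sign_append:
  assumes "wf_blocks (P @ Q)"
  shows "block_sign (P @ Q) = block_sign P * block_sign Q * (-1) ^ crossings (\<Union>(set P)) (\<Union>(set Q))"
  using assms
proof (induction P)
  case (Cons I P)
  have wPQ: "wf_blocks (P @ Q)" using wf_blocks_Cons[of I "P @ Q"] Cons.prems by simp
  have wIP: "wf_blocks (I # P)" "wf_blocks Q" using wf_blocks_append[of "I # P" Q] Cons.prems by auto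
  have dIP: "I \<inter> \<Union>(set P) = {}" using wf_blocks_Cons_disjoint[OF wIP(1)] .
  have dPQ: "\<Union>(set P) \<inter> \<Union>(set Q) = {}" using wf_blocks_append(3)[OF wPQ] .
  have fI: "finite I" using wIP unfolding wf_blocks_def by auto
  have fP: "finite (\<Union>(set P))" using finite_Union_blocks[OF wf_blocks_Cons[OF wIP(1)]] .
  have fQ: "finite (\<Union>(set Q))" using finite_Union_blocks[OF wIP(2)] .
  have "block_sign ((I # P) @ Q) = (-1) ^ crossings I (\<Union>(set P) \<union> \<Union>(set Q)) * block_sign (P @ Q)"
    by simp
  also have "\<dots> = (-1) ^ (crossings I (\<Union>(set P)) + crossings I (\<Union>(set Q)))
                  * (block_sign P * block_sign Q * (-1) ^ crossings (\<Union>(set P)) (\<Union>(set Q)))"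
    using Cons.IH[OF wPQ] crossings_Un_right[OF fI fP fQ dPQ] by simp
  also have "\<dots> = block_sign (I # P) * block_sign Q * (-1) ^ crossings (\<Union>(set (I # P))) (\<Union>(set Q))"
    using crossings_Un_left[OF fI fP fQ dIP] by (simp add: power_add)
  finally show ?case .
qed simp

lemma block_sign_move_to_front:
  assumes "wf_blocks (Q1 @ I # Q2)"
  shows "block_sign (Q1 @ I # Q2) = block_sign (I # Q1 @ Q2) * (-1) ^ (card (\<Union>(set Q1)) * card I)"
proof -
  let ?U1 = "\<Union>(set Q1)" and ?U2 = "\<Union>(set Q2)"
  have w1: "wf_blocks Q1" "wf_blocks (I # Q2)" using wf_blocks_append[OF assms] by auto
  have d1: "?U1 \<inter> (I \<union> ?U2) = {}" using wf_blocks_append(3)[OF assms] by simp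
  have dI2: "I \<inter> ?U2 = {}" using wf_blocks_Cons_disjoint[OF w1(2)] .
  have fI: "finite I" using w1 unfolding wf_blocks_def by auto
  have f1: "finite ?U1" using finite_Union_blocks[OF w1(1)] .
  have f2: "finite ?U2" using finite_Union_blocks[OF wf_blocks_Cons[OF w1(2)]] .
  have w12: "wf_blocks (Q1 @ Q2)" using assms unfolding wf_blocks_def by (auto intro: pairwise_subset)
  have "block_sign (Q1 @ I # Q2) = block_sign Q1 * block_sign Q2
          * (-1) ^ (crossings I ?U2 + crossings ?U1 ?U2 + crossings ?U1 I)"
    using block_sign_append[OF assms] crossings_Un_right[OF f1 fI f2 dI2]
    by (simp add: power_add)
  moreover have "block_sign (I # Q1 @ Q2) = block_sign Q1 * block_sign Q2
          * (-1) ^ (crossings I ?U2 + crossings ?U1 ?U2 + crossings I ?U1)"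
  proof -
    have "?U1 \<inter> ?U2 = {}" using d1 by auto
    then show ?thesis
      using crossings_Un_right[OF fI f1 f2] block_sign_append[OF w12] by (simp add: power_add)
  qed
  moreover have "(-1::int) ^ crossings ?U1 I = (-1) ^ crossings I ?U1 * (-1) ^ (card ?U1 * card I)"
  proof -
    have "crossings ?U1 I + 2 * crossings I ?U1 = crossings I ?U1 + card ?U1 * card I"
      using crossings_add_swap[OF f1 fI] d1 by (simp add: Int_Un_distrib)
    then have "(-1::int) ^ (crossings ?U1 I + 2 * crossings I ?U1)
                 = (-1) ^ (crossings I ?U1 + card ?U1 * card I)" by (simp only:)
    then show ?thesis by (simp add: power_add power_mult)
  qed
  ultimately show ?thesis by (simp add: power_add)
qed

definition odd_blocks :: "nat set set \<Rightarrow> nat" where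
  "odd_blocks p = card {I \<in> p. odd (card I)}"

lemma even_card_Union_blocks:
  assumes "wf_blocks Q" "\<forall>J\<in>set Q. even (card J)"
  shows "even (card (\<Union>(set Q)))"
proof -
  have "card (\<Union>(set Q)) = sum card (set Q)"
    using assms unfolding wf_blocks_def by (intro card_Union_disjoint) auto
  then show ?thesis using assms(2) by (simp add: dvd_sum)
qed

lemma even_card_if_other_block_odd:
  assumes "finite p" "odd_blocks p \<le> 1" "I \<in> p" "J \<in> p" "J \<noteq> I" "odd (card I)"
  shows "even (card J)"
proof (rule ccontr)
  assume "odd (card J)"
  then have "{I, J} \<subseteq> {K \<in> p. odd (card K)}" using assms(3,4,6) by auto
  then have "card {I, J} \<le> odd_blocks p" unfolding odd_blocks_def using assms(1) by (simp add: card_mono)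
  then show False using assms(2,5) by simp
qed

lemma block_sign_eq_if_same_blocks:
  assumes "wf_blocks P" "wf_blocks Q" "set P = set Q" "odd_blocks (set P) \<le> 1"
  shows "block_sign P = block_sign Q"
  using assms
proof (induction P arbitrary: Q)
  case (Cons I P')
  then obtain Q1 Q2 where Q: "Q = Q1 @ I # Q2" by (metis list.set_intros(1) split_list)
  have dQ: "distinct Q" and dP: "distinct (I # P')"
    using Cons.prems(1,2) unfolding wf_blocks_def by auto
  have sets: "set P' = set (Q1 @ Q2)"
    using Cons.prems(3) dP dQ unfolding Q by (auto simp: insert_ident)
  have w12: "wf_blocks (Q1 @ Q2)"
    using Cons.prems(2) dQ unfolding Q wf_blocks_def by (auto intro: pairwise_subset)
  have "odd_blocks (set P') \<le> odd_blocks (set (I # P'))"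
    unfolding odd_blocks_def by (rule card_mono) auto
  then have IH: "block_sign P' = block_sign (Q1 @ Q2)"
    using Cons.IH[OF wf_blocks_Cons[OF Cons.prems(1)] w12 sets] Cons.prems(4) by simp
  have "even (card J)" if "J \<in> set Q1" "odd (card I)" for J
    using even_card_if_other_block_odd[of "set (I # P')" I J] that sets Cons.prems(4) dQ unfolding Q
    by auto
  then have "even (card (\<Union>(set Q1)) * card I)"
    using even_card_Union_blocks[OF wf_blocks_append(1)[OF Cons.prems(2)[unfolded Q]]] by auto
  then have "block_sign Q = block_sign (I # Q1 @ Q2)"
    using block_sign_move_to_front Cons.prems(2) unfolding Q by simp
  then show ?case using IH sets by simp
qed simp

definition ordering_of :: "nat set set \<Rightarrow> nat set list" where
  "ordering_of p = (SOME P. distinct P \<and> set P = p)"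

lemma ordering_of_distinct_set: "finite p \<Longrightarrow> distinct (ordering_of p) \<and> set (ordering_of p) = p"
  unfolding ordering_of_def by (rule someI_ex) (use finite_distinct_list in blast)

text \<open>This is \<open>\<epsilon>(p)\<close> of the paper; by \<open>block_sign_eq_if_same_blocks\<close> the chosen ordering is
  irrelevant when \<open>p\<close> has at most one odd block.\<close>
definition partition_sign :: "nat set set \<Rightarrow> int" where
  "partition_sign p = block_sign (ordering_of p)"

lemma wf_blocks_ordering:
  "partition_on A (set P) \<Longrightarrow> distinct P \<Longrightarrow> finite A \<Longrightarrow> wf_blocks P"
  unfolding wf_blocks_def partition_on_def by (auto intro: finite_subset)

lemma partition_sign_eq_block_sign:
  assumes "partition_on A p" "finite A" "odd_blocks p \<le> 1" "distinct P" "set P = p"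
  shows "partition_sign p = block_sign P"
proof -
  have "distinct (ordering_of p)" "set (ordering_of p) = p"
    using ordering_of_distinct_set finite_elements[OF assms(2,1)] by auto
  then show ?thesis unfolding partition_sign_def
    using assms by (intro block_sign_eq_if_same_blocks wf_blocks_ordering[of A]) auto
qed

section \<open>Pairings and a Pfaffian identity\<close>

definition card_parity :: "nat set \<Rightarrow> nat" where
  "card_parity I = (if odd (card I) then 1 else 0)"

lemma odd_blocks_singleton: "odd_blocks {B} = card_parity B"
proof -
  have "{I \<in> {B}. odd (card I)} = (if odd (card B) then {B} else {})" by auto
  then show ?thesis unfolding odd_blocks_def card_parity_def by simp
qed

lemma odd_blocks_mono: "finite p \<Longrightarrow> q \<subseteq> p \<Longrightarrow> odd_blocks q \<le> odd_blocks p"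
  unfolding odd_blocks_def by (rule card_mono) auto

lemma odd_blocks_Un:
  "finite p \<Longrightarrow> finite q \<Longrightarrow> p \<inter> q = {} \<Longrightarrow> odd_blocks (p \<union> q) = odd_blocks p + odd_blocks q"
  unfolding odd_blocks_def by (subst card_Un_disjoint[symmetric]) (auto intro: arg_cong[where f = card])

lemma odd_blocks_insert:
  "finite q \<Longrightarrow> B \<notin> q \<Longrightarrow> odd_blocks (insert B q) = card_parity B + odd_blocks q"
  using odd_blocks_Un[of "{B}" q] by (simp add: odd_blocks_singleton)

lemma partition_on_Un:
  assumes "partition_on A p" "partition_on B q" "A \<inter> B = {}"
  shows "partition_on (A \<union> B) (p \<union> q)" "p \<inter> q = {}"
proof -
  note p = partition_onD1[OF assms(1)] partition_onD2[OF assms(1)] partition_onD3[OF assms(1)]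
  note q = partition_onD1[OF assms(2)] partition_onD2[OF assms(2)] partition_onD3[OF assms(2)]
  have "disjoint (p \<union> q)" using assms(3) p q by (intro disjoint_union) auto
  then show "partition_on (A \<union> B) (p \<union> q)" using p q unfolding partition_on_def by auto
  show "p \<inter> q = {}"
  proof (rule ccontr)
    assume "p \<inter> q \<noteq> {}"
    then obtain X where "X \<in> p" "X \<in> q" by blast
    moreover obtain x where "x \<in> X" using p(3) calculation(1) by fastforce
    ultimately show False using assms(3) p(1) q(1) by blast
  qed
qed

lemma partition_on_subset:
  assumes "partition_on A p" "q \<subseteq> p"
  shows "partition_on (\<Union>q) q" "partition_on (A - \<Union>q) (p - q)"
proof -
  have "\<Union>(p - q) = A - \<Union>q"
  proof (intro equalityI subsetI)
    fix x assume "x \<in> \<Union>(p - q)"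
    then obtain X where X: "X \<in> p" "X \<notin> q" "x \<in> X" by blast
    have "x \<notin> Y" if "Y \<in> q" for Y
    proof
      assume "x \<in> Y"
      moreover have "Y \<in> p" "Y \<noteq> X" using that assms(2) X by auto
      ultimately show False using partition_onD2[OF assms(1)] X unfolding pairwise_def disjnt_def by blast
    qed
    then show "x \<in> A - \<Union>q" using X partition_onD1[OF assms(1)] by auto
  next
    fix x assume "x \<in> A - \<Union>q"
    then show "x \<in> \<Union>(p - q)" using partition_onD1[OF assms(1)] by auto
  qed
  moreover have "disjoint q" "disjoint (p - q)"
    using pairwise_subset[OF partition_onD2[OF assms(1)]] assms(2) by auto
  moreover have "{} \<notin> q" "{} \<notin> p - q" using partition_onD3[OF assms(1)] assms(2) by auto
  ultimately show "partition_on (\<Union>q) q" "partition_on (A - \<Union>q) (p - q)"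
    unfolding partition_on_def by simp_all
qed

lemma partition_sign_Un:
  assumes "partition_on A p" "partition_on B q" "A \<inter> B = {}" "finite A" "finite B"
    and "odd_blocks (p \<union> q) \<le> 1"
  shows "partition_sign (p \<union> q) = partition_sign p * partition_sign q * (-1) ^ crossings A B"
proof -
  have pq: "partition_on (A \<union> B) (p \<union> q)" "p \<inter> q = {}" using partition_on_Un[OF assms(1-3)] .
  have fin: "finite (p \<union> q)" using finite_elements[OF _ pq(1)] assms(4,5) by simp
  define P where "P = ordering_of p"
  define Q where "Q = ordering_of q"
  have P: "distinct P" "set P = p" and Q: "distinct Q" "set Q = q"
    using ordering_of_distinct_set fin unfolding P_def Q_def by auto
  have PQ: "distinct (P @ Q)" "set (P @ Q) = p \<union> q" using P Q pq(2) by auto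
  have "partition_sign (p \<union> q) = block_sign (P @ Q)"
    using partition_sign_eq_block_sign[OF pq(1) _ assms(6) PQ] assms(4,5) by simp
  also have "\<dots> = block_sign P * block_sign Q * (-1) ^ crossings A B"
  proof -
    have "wf_blocks (P @ Q)"
      using wf_blocks_ordering[of "A \<union> B" "P @ Q"] PQ pq(1) assms(4,5) by simp
    moreover have "\<Union>(set P) = A" "\<Union>(set Q) = B"
      using partition_onD1[OF assms(1)] partition_onD1[OF assms(2)] P(2) Q(2) by auto
    ultimately show ?thesis using block_sign_append by metis
  qed
  also have "block_sign P = partition_sign p"
    using partition_sign_eq_block_sign[OF assms(1) assms(4) _ P] odd_blocks_mono[OF fin, of p] assms(6)
    by simp
  also have "block_sign Q = partition_sign q"
    using partition_sign_eq_block_sign[OF assms(2) assms(5) _ Q] odd_blocks_mono[OF fin, of q] assms(6)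
    by simp
  finally show ?thesis .
qed

lemma partition_sign_empty: "partition_sign {} = 1"
  using partition_sign_eq_block_sign[of "{}" "{}" "[]"] by (simp add: odd_blocks_def partition_on_empty)

lemma partition_sign_singleton: "finite B \<Longrightarrow> B \<noteq> {} \<Longrightarrow> partition_sign {B} = 1"
  using partition_sign_eq_block_sign[of B "{B}" "[B]"] partition_on_space[of B]
  by (simp add: odd_blocks_singleton card_parity_def)

definition pairings :: "nat \<Rightarrow> nat set \<Rightarrow> nat set set set" where
  "pairings j I = {p. partition_on I p \<and> (\<forall>B\<in>p. card B \<le> 2) \<and> odd_blocks p = j}"

lemma finite_pairings: "finite I \<Longrightarrow> finite (pairings j I)"
  by (rule finite_subset[of _ "Pow (Pow I)"]) (auto simp: pairings_def partition_on_def)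

lemma sum_partition_sign_pairings_with_block:
  assumes "finite I" "B \<subseteq> I" "B \<noteq> {}" "card B \<le> 2" "card_parity B \<le> j" "j \<le> 1"
  shows "(\<Sum>p | p \<in> pairings j I \<and> B \<in> p. partition_sign p)
           = (-1) ^ crossings B (I - B) * (\<Sum>q\<in>pairings (j - card_parity B) (I - B). partition_sign q)"
  unfolding sum_distrib_left
proof (rule sum.reindex_bij_witness[where j = "insert B" and i = "\<lambda>p. p - {B}", symmetric])
  fix q assume q: "q \<in> pairings (j - card_parity B) (I - B)"
  then have part: "partition_on (I - B) q" by (simp add: pairings_def)
  then have Bq: "B \<notin> q" "disjnt B (\<Union>q)" using assms(3) by (auto simp: partition_on_def disjnt_def)
  have finq: "finite q" using finite_elements[OF _ part] assms(1) by simp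
  show "insert B q - {B} = q" using Bq by simp
  have "partition_on I (insert B q)" using part assms(2,3) by (simp add: partition_on_insert[OF Bq(2)])
  moreover have "odd_blocks (insert B q) = j"
    using odd_blocks_insert[OF finq Bq(1)] q assms(5) by (simp add: pairings_def)
  ultimately show "insert B q \<in> {p. p \<in> pairings j I \<and> B \<in> p}"
    using q assms(4) by (simp add: pairings_def)
  have "partition_sign ({B} \<union> q) = partition_sign {B} * partition_sign q * (-1) ^ crossings B (I - B)"
    using partition_sign_Un[OF partition_on_space[OF assms(3)] part] assms \<open>odd_blocks (insert B q) = j\<close>
    by (auto intro: finite_subset)
  then show "partition_sign (insert B q) = (-1) ^ crossings B (I - B) * partition_sign q"
    using partition_sign_singleton[of B] assms(1-3) finite_subset by auto
next
  fix p assume "p \<in> {p. p \<in> pairings j I \<and> B \<in> p}"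
  then have p: "partition_on I p" "\<forall>B\<in>p. card B \<le> 2" "odd_blocks p = j" "B \<in> p"
    by (auto simp: pairings_def)
  show "insert B (p - {B}) = p" using p(4) by auto
  have "disjnt B (\<Union>(p - {B}))"
    using partition_onD2[OF p(1)] p(4) by (auto simp: pairwise_def disjnt_def)
  then have "partition_on (I - B) (p - {B})"
    using p(1,4) partition_on_insert[of B "p - {B}" I] by (simp add: insert_absorb)
  moreover have "odd_blocks p = card_parity B + odd_blocks (p - {B})"
    using odd_blocks_insert[of "p - {B}" B] finite_elements[OF assms(1) p(1)] p(4)
    by (simp add: insert_absorb)
  ultimately show "p - {B} \<in> pairings (j - card_parity B) (I - B)"
    using p by (simp add: pairings_def)
qed

lemma sum_minus_one_power_card_less:
  "finite (X::nat set) \<Longrightarrow> (\<Sum>b\<in>X. (-1::int) ^ card {c \<in> X. c < b}) = (if odd (card X) then 1 else 0)"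
proof (induction X rule: finite_linorder_max_induct)
  case (insert b A)
  have less_b: "{c \<in> insert b A. c < b} = A" and b: "b \<notin> A" using insert by auto
  have "{c \<in> insert b A. c < x} = {c \<in> A. c < x}" if "x \<in> A" for x using insert that by auto
  then have "(\<Sum>x\<in>A. (-1::int) ^ card {c \<in> insert b A. c < x})
               = (\<Sum>x\<in>A. (-1::int) ^ card {c \<in> A. c < x})"
    by (intro sum.cong) auto
  then have "(\<Sum>x\<in>insert b A. (-1::int) ^ card {c \<in> insert b A. c < x})
               = (-1) ^ card A + (\<Sum>x\<in>A. (-1::int) ^ card {c \<in> A. c < x})"
    using insert less_b b by (simp add: sum.insert)
  then show ?case using insert by auto
qed simp

lemma sum_crossings_pairs_with_min:
  assumes "finite I" "a \<in> I" "\<forall>c\<in>I. a \<le> c"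
  shows "(\<Sum>B\<in>(\<lambda>b. {a, b}) ` (I - {a}). (-1::int) ^ crossings B (I - B))
           = (if odd (card (I - {a})) then 1 else 0)"
proof -
  have crossings_pair: "crossings {a, b} (I - {a, b}) = card {c \<in> I - {a}. c < b}" if "b \<in> I - {a}" for b
  proof -
    have "{(x, c). x \<in> {a, b} \<and> c \<in> I - {a, b} \<and> c < x} = Pair b ` {c \<in> I - {a}. c < b}"
      using assms(3) that by force
    then show ?thesis unfolding crossings_def by (simp add: card_image inj_on_def)
  qed
  have "inj_on (\<lambda>b. {a, b}) (I - {a})" by (auto simp: inj_on_def doubleton_eq_iff)
  then have "(\<Sum>B\<in>(\<lambda>b. {a, b}) ` (I - {a}). (-1::int) ^ crossings B (I - B))
               = (\<Sum>b\<in>I - {a}. (-1) ^ card {c \<in> I - {a}. c < b})"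
    by (simp add: sum.reindex crossings_pair)
  then show ?thesis using sum_minus_one_power_card_less[of "I - {a}"] assms(1) by simp
qed

definition blocks_through :: "nat \<Rightarrow> nat set \<Rightarrow> nat set set" where
  "blocks_through a I = (\<lambda>b. {a, b}) ` (I - {a}) \<union> (if odd (card I) then {{a}} else {})"

lemma blocks_through_props:
  assumes "finite I" "a \<in> I" "B \<in> blocks_through a I"
  shows "a \<in> B" "B \<subseteq> I" "B \<noteq> {}" "card B \<le> 2" "card_parity B \<le> card_parity I"
    "card_parity (I - B) = card_parity I - card_parity B"
proof -
  consider b where "b \<in> I - {a}" "B = {a, b}" | "odd (card I)" "B = {a}"
    using assms(3) unfolding blocks_through_def by (auto split: if_splits)
  then have "a \<in> B \<and> B \<subseteq> I \<and> B \<noteq> {} \<and> card B \<le> 2 \<and> card_parity B \<le> card_parity I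
               \<and> card_parity (I - B) = card_parity I - card_parity B"
  proof cases
    case (1 b)
    then have "card {a, b} \<le> card I" using card_mono[OF assms(1), of "{a, b}"] assms(2) by auto
    then show ?thesis using 1 assms(1,2) by (auto simp: card_parity_def card_Diff_subset)
  next
    case 2
    then show ?thesis using assms(1,2) by (auto simp: card_parity_def)
  qed
  then show "a \<in> B" "B \<subseteq> I" "B \<noteq> {}" "card B \<le> 2" "card_parity B \<le> card_parity I"
    "card_parity (I - B) = card_parity I - card_parity B" by auto
qed

lemma block_through_in_pairing:
  assumes "p \<in> pairings (card_parity I) I" "a \<in> I" "finite I"
  shows "\<exists>B\<in>p. B \<in> blocks_through a I"
proof -
  have p: "partition_on I p" "\<forall>B\<in>p. card B \<le> 2" "odd_blocks p = card_parity I"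
    using assms(1) by (auto simp: pairings_def)
  obtain B where B: "B \<in> p" "a \<in> B" using p(1) assms(2) unfolding partition_on_def by blast
  have "B \<subseteq> I" using p(1) B unfolding partition_on_def by blast
  then have "finite B" using assms(3) finite_subset by blast
  show ?thesis
  proof (cases "B = {a}")
    case True
    have "card {{a}} \<le> odd_blocks p"
      unfolding odd_blocks_def using True B(1) finite_elements[OF assms(3) p(1)] by (intro card_mono) auto
    then have "odd (card I)" using p(3) by (simp add: card_parity_def split: if_splits)
    then show ?thesis using True B(1) by (auto simp: blocks_through_def)
  next
    case False
    then obtain b where b: "b \<in> B" "b \<noteq> a" using B(2) by blast
    have "card B \<le> 2" using p(2) B(1) by blast
    moreover have "{a, b} \<subseteq> B" "card {a, b} = 2" using B(2) b by auto
    ultimately have "B = {a, b}" using \<open>finite B\<close> by (metis card_mono card_subset_eq order_antisym)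
    then show ?thesis using b \<open>B \<subseteq> I\<close> B(1) unfolding blocks_through_def by blast
  qed
qed

lemma sum_pairings_by_block_through:
  assumes "finite I" "a \<in> I"
  shows "(\<Sum>p\<in>pairings (card_parity I) I. f p)
           = (\<Sum>B\<in>blocks_through a I. \<Sum>p | p \<in> pairings (card_parity I) I \<and> B \<in> p. f p)"
proof -
  define with_block where "with_block B = {p. p \<in> pairings (card_parity I) I \<and> B \<in> p}" for B
  have "pairings (card_parity I) I = (\<Union>B\<in>blocks_through a I. with_block B)"
    using block_through_in_pairing[OF _ assms(2,1)] unfolding with_block_def by blast
  moreover have "with_block B \<inter> with_block B' = {}"
    if "B \<in> blocks_through a I" "B' \<in> blocks_through a I" "B \<noteq> B'" for B B'
  proof -
    have "a \<in> B" "a \<in> B'" using blocks_through_props(1)[OF assms] that by auto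
    moreover have "disjnt B B'" if "p \<in> pairings (card_parity I) I" "B \<in> p" "B' \<in> p" for p
      using pairwiseD[OF partition_onD2, of I p B B'] that \<open>B \<noteq> B'\<close> by (simp add: pairings_def)
    ultimately show ?thesis unfolding with_block_def by (auto simp: disjnt_def)
  qed
  moreover have "finite (blocks_through a I)" using assms(1) by (simp add: blocks_through_def)
  moreover have "finite (with_block B)" for B
    using finite_pairings[OF assms(1)] unfolding with_block_def by simp
  ultimately show ?thesis unfolding with_block_def[symmetric] by (simp add: sum.UNION_disjoint)
qed

lemma sum_crossings_blocks_through_Min:
  assumes "finite I" "I \<noteq> {}"
  shows "(\<Sum>B\<in>blocks_through (Min I) I. (-1::int) ^ crossings B (I - B)) = 1"
proof -
  let ?a = "Min I"
  have a: "?a \<in> I" "\<forall>c\<in>I. ?a \<le> c" using assms by auto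
  have "{(x, c). x \<in> {?a} \<and> c \<in> I - {?a} \<and> c < x} = {}" using a(2) by (auto simp: not_less)
  then have "crossings {?a} (I - {?a}) = 0" unfolding crossings_def by (simp only: card.empty)
  moreover have "{?a} \<notin> (\<lambda>b. {?a, b}) ` (I - {?a})" by auto
  moreover have "odd (card (I - {?a})) \<longleftrightarrow> even (card I)"
    using a(1) assms(1) card_gt_0_iff by fastforce
  ultimately show ?thesis
    using sum_crossings_pairs_with_min[OF assms(1) a] assms(1) by (simp add: blocks_through_def)
qed

text \<open>For even \<open>card I\<close> this says that the Pfaffian of the skew-symmetric matrix with all entries
  above the diagonal equal to 1 is 1.\<close>
lemma sum_partition_sign_pairings:
  assumes "finite I"
  shows "(\<Sum>p\<in>pairings (card_parity I) I. partition_sign p) = 1"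
  using assms
proof (induction "card I" arbitrary: I rule: less_induct)
  case less
  show ?case
  proof (cases "I = {}")
    case True
    then have "pairings (card_parity I) I = {{}}"
      by (auto simp: pairings_def partition_on_empty card_parity_def odd_blocks_def)
    then show ?thesis by (simp add: partition_sign_empty)
  next
    case False
    let ?a = "Min I"
    have a: "?a \<in> I" using False less.prems by simp
    have "(\<Sum>p\<in>pairings (card_parity I) I. partition_sign p)
            = (\<Sum>B\<in>blocks_through ?a I. \<Sum>p | p \<in> pairings (card_parity I) I \<and> B \<in> p. partition_sign p)"
      using sum_pairings_by_block_through[OF less.prems a] .
    also have "\<dots> = (\<Sum>B\<in>blocks_through ?a I. (-1) ^ crossings B (I - B))"
    proof (rule sum.cong)
      fix B assume "B \<in> blocks_through ?a I"
      note B = blocks_through_props[OF less.prems a this]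
      have "card (I - B) < card I" using B(2,3) less.prems by (intro psubset_card_mono) auto
      then have "sum partition_sign (pairings (card_parity I - card_parity B) (I - B)) = 1"
        using less.hyps[of "I - B"] B(6) less.prems by simp
      then show "(\<Sum>p | p \<in> pairings (card_parity I) I \<and> B \<in> p. partition_sign p) = (-1) ^ crossings B (I - B)"
        using sum_partition_sign_pairings_with_block[OF less.prems B(2-5)] by (simp add: card_parity_def)
    qed simp
    also have "\<dots> = 1" using sum_crossings_blocks_through_Min[OF less.prems False] .
    finally show ?thesis .
  qed
qed

section \<open>The convolution identity\<close>

definition pos_pairings :: "(nat \<Rightarrow> real) \<Rightarrow> nat \<Rightarrow> nat set \<Rightarrow> nat set set set" where
  "pos_pairings lam j T = {p \<in> pairings j T. \<forall>B\<in>p. sJ B lam > 0}"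

lemma finite_pos_pairings: "finite T \<Longrightarrow> finite (pos_pairings lam j T)"
  by (rule finite_subset[OF _ finite_pairings]) (auto simp: pos_pairings_def)

text \<open>\<open>pairing_sum lam k T\<close> is the right-hand side of the theorem for the ground set \<open>T\<close>,
  restricted to partitions with exactly \<open>k\<close> odd blocks.\<close>
definition pairing_sum :: "(nat \<Rightarrow> real) \<Rightarrow> nat \<Rightarrow> nat set \<Rightarrow> int" where
  "pairing_sum lam k T = (-1) ^ card T * (\<Sum>p\<in>pos_pairings lam k T. partition_sign p)"

definition eps_block :: "nat set \<Rightarrow> int" where
  "eps_block I = (-1) ^ (card I * (card I - 1) div 2)"

lemma card_add_odd_blocks_pairing:
  assumes "p \<in> pairings j I" "finite I"
  shows "card I + odd_blocks p = 2 * card p"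
proof -
  have part: "partition_on I p" and small: "\<forall>B\<in>p. card B \<le> 2" using assms(1) by (auto simp: pairings_def)
  have fin: "finite B" if "B \<in> p" for B
  proof -
    have "B \<subseteq> I" using that partition_onD1[OF part] by blast
    then show ?thesis using assms(2) by (rule finite_subset)
  qed
  have "card I = (\<Sum>B\<in>p. card B)" using product_partition[OF part fin] .
  moreover have "odd_blocks p = (\<Sum>B\<in>p. card_parity B)"
  proof -
    have "{B \<in> p. odd (card B)} = p \<inter> {B. odd (card B)}" by auto
    then show ?thesis
      unfolding odd_blocks_def card_parity_def using finite_elements[OF assms(2) part]
      by (simp add: sum.If_cases)
  qed
  moreover have "card B + card_parity B = 2" if "B \<in> p" for B
  proof -
    have "card B \<noteq> 0" using partition_onD3[OF part] fin[OF that] that by auto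
    then have "card B = 1 \<or> card B = 2" using small that by auto
    then show ?thesis by (auto simp: card_parity_def)
  qed
  ultimately show ?thesis by (simp flip: sum.distrib)
qed

lemma minus_one_power_triangular:
  assumes "c + b = 2 * q" "b \<le> (1::nat)"
  shows "(-1::int) ^ (c * (c - 1) div 2) = (-1) ^ c * (-1) ^ q"
proof -
  have "even (c * (c - 1) div 2 + c + q)"
  proof (cases "b = 0")
    case True
    then have "c * (c - 1) div 2 + c + q = 2 * (q * q + q)"
      using assms(1) by (cases q) (simp_all add: algebra_simps)
    then show ?thesis by simp
  next
    case False
    then have "b = 1" using assms(2) by simp
    moreover obtain r where "q = r + 1" using assms(1) \<open>b = 1\<close> by (cases q) auto
    ultimately have "q = r + 1" "c = 2 * r + 1" using assms(1) by auto
    then have "c * (c - 1) div 2 + c + q = 2 * (r * r + 2 * r + 1)" by (simp add: algebra_simps)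
    then show ?thesis by simp
  qed
  then show ?thesis by (auto simp: minus_one_power_iff)
qed

text \<open>This is where the Pfaffian identity enters: every pairing of \<open>I\<close> has the same number of
  blocks, so the signed sum over pairings collapses to a power of \<open>-1\<close>.\<close>
lemma eps_block_eq_sum_pairings:
  assumes "finite I"
  shows "eps_block I = (-1) ^ card I * (\<Sum>p\<in>pairings (card_parity I) I. (-1) ^ card p * partition_sign p)"
proof -
  define q where "q = (card I + card_parity I) div 2"
  have "card p = q" if "p \<in> pairings (card_parity I) I" for p
    using card_add_odd_blocks_pairing[OF that assms] that unfolding q_def pairings_def by auto
  then have "(\<Sum>p\<in>pairings (card_parity I) I. (-1::int) ^ card p * partition_sign p)
               = (-1) ^ q * (\<Sum>p\<in>pairings (card_parity I) I. partition_sign p)"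
    by (simp add: sum_distrib_left)
  also have "\<dots> = (-1) ^ q" using sum_partition_sign_pairings[OF assms] by simp
  finally show ?thesis
    unfolding eps_block_def
    by (subst minus_one_power_triangular[of _ "card_parity I" q]) (auto simp: q_def card_parity_def)
qed

lemma pairings_Un:
  assumes "finite S" "I \<subseteq> S" "card_parity I \<le> k"
    and "p \<in> pairings (card_parity I) I" "q \<in> pairings (k - card_parity I) (S - I)"
  shows "q \<union> p \<in> pairings k S" "q \<inter> p = {}"
proof -
  have p: "partition_on I p" and q: "partition_on (S - I) q" using assms(4,5) by (auto simp: pairings_def)
  have u: "partition_on ((S - I) \<union> I) (q \<union> p)" "q \<inter> p = {}" using partition_on_Un[OF q p] by auto
  then show "q \<inter> p = {}" by simp
  have "finite I" using assms(1,2) finite_subset by blast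
  then have "odd_blocks (q \<union> p) = odd_blocks q + odd_blocks p"
    using finite_elements[OF _ q] finite_elements[OF _ p] assms(1) u(2) by (simp add: odd_blocks_Un)
  also have "\<dots> = k" using assms(3-5) by (simp add: pairings_def)
  finally show "q \<union> p \<in> pairings k S"
    using u assms(2,4,5) by (auto simp: pairings_def Un_absorb2)
qed

lemma pairings_split:
  assumes "finite S" "p \<in> pairings k S" "q \<subseteq> p" "k \<le> 1"
  shows "\<Union>q \<subseteq> S" "card_parity (\<Union>q) \<le> k"
    "q \<in> pairings (card_parity (\<Union>q)) (\<Union>q)" "p - q \<in> pairings (k - card_parity (\<Union>q)) (S - \<Union>q)"
proof -
  have part: "partition_on S p" and small: "\<forall>B\<in>p. card B \<le> 2" and odd: "odd_blocks p = k"
    using assms(2) by (auto simp: pairings_def)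
  show sub: "\<Union>q \<subseteq> S" using partition_onD1[OF part] assms(3) by auto
  have fin: "finite p" using finite_elements[OF assms(1) part] .
  have pq: "partition_on (\<Union>q) q" "partition_on (S - \<Union>q) (p - q)"
    using partition_on_subset[OF part assms(3)] by auto
  have "odd_blocks q \<le> k" using odd_blocks_mono[OF fin assms(3)] odd by simp
  moreover have "card (\<Union>q) + odd_blocks q = 2 * card q"
  proof (rule card_add_odd_blocks_pairing)
    show "q \<in> pairings (odd_blocks q) (\<Union>q)" using pq(1) small assms(3) by (auto simp: pairings_def)
    show "finite (\<Union>q)" using sub assms(1) by (rule finite_subset)
  qed
  ultimately have parity: "card_parity (\<Union>q) = odd_blocks q"
    using assms(4) unfolding card_parity_def by presburger
  then show "card_parity (\<Union>q) \<le> k" using \<open>odd_blocks q \<le> k\<close> by simp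
  show "q \<in> pairings (card_parity (\<Union>q)) (\<Union>q)" using pq(1) small assms(3) parity by (auto simp: pairings_def)
  have "p = q \<union> (p - q)" using assms(3) by auto
  then have "odd_blocks p = odd_blocks q + odd_blocks (p - q)"
    using odd_blocks_Un[of q "p - q"] fin assms(3) finite_subset[OF assms(3) fin] by simp
  then show "p - q \<in> pairings (k - card_parity (\<Union>q)) (S - \<Union>q)"
    using pq(2) small odd parity by (auto simp: pairings_def)
qed

lemma sJ_partition_on:
  assumes "partition_on S p" "finite S"
  shows "sJ S lam = (\<Sum>B\<in>p. sJ B lam)"
proof -
  have "\<forall>B\<in>p. finite B" using partition_onD1[OF assms(1)] assms(2) by (auto intro: finite_subset)
  moreover have "\<forall>A\<in>p. \<forall>B\<in>p. A \<noteq> B \<longrightarrow> A \<inter> B = {}"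
    using partition_onD2[OF assms(1)] unfolding pairwise_def disjnt_def by simp
  ultimately have "sum lam (\<Union>p) = (\<Sum>B\<in>p. sum lam B)" by (simp add: sum.Union_disjoint)
  then show ?thesis unfolding sJ_def partition_onD1[OF assms(1)] .
qed

text \<open>Toggling a block \<open>B\<^sub>0\<close> with \<open>P B\<^sub>0\<close> is a sign-reversing involution.\<close>
lemma sum_minus_one_power_card_subsets_eq_0:
  assumes "finite p" "B\<^sub>0 \<in> p" "P B\<^sub>0"
  shows "(\<Sum>q | q \<subseteq> p \<and> (\<forall>B\<in>p - q. P B). (-1::int) ^ card q) = 0"
proof -
  define X where "X = {q. q \<subseteq> p \<and> (\<forall>B\<in>p - q. P B)}"
  have fin: "finite X" unfolding X_def by (rule finite_subset[of _ "Pow p"]) (use assms(1) in auto)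
  have "(\<Sum>q\<in>{q \<in> X. B\<^sub>0 \<notin> q}. - ((-1::int) ^ card q)) = (\<Sum>q\<in>{q \<in> X. B\<^sub>0 \<in> q}. (-1) ^ card q)"
  proof (rule sum.reindex_bij_witness[where j = "insert B\<^sub>0" and i = "\<lambda>q. q - {B\<^sub>0}"])
    fix q assume q: "q \<in> {q \<in> X. B\<^sub>0 \<notin> q}"
    then have "finite q" using assms(1) unfolding X_def by (auto intro: finite_subset)
    then show "(-1::int) ^ card (insert B\<^sub>0 q) = - ((-1) ^ card q)" using q by simp
  qed (use assms in \<open>auto simp: X_def\<close>)
  moreover have "X = {q \<in> X. B\<^sub>0 \<notin> q} \<union> {q \<in> X. B\<^sub>0 \<in> q}"
    and "{q \<in> X. B\<^sub>0 \<notin> q} \<inter> {q \<in> X. B\<^sub>0 \<in> q} = {}" by auto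
  ultimately have "(\<Sum>q\<in>X. (-1::int) ^ card q)
                     = (\<Sum>q\<in>{q \<in> X. B\<^sub>0 \<notin> q}. (-1) ^ card q) + (\<Sum>q\<in>{q \<in> X. B\<^sub>0 \<in> q}. (-1) ^ card q)"
    using fin by (metis (no_types, lifting) finite_Un sum.union_disjoint)
  then show ?thesis
    using \<open>(\<Sum>q\<in>{q \<in> X. B\<^sub>0 \<notin> q}. - ((-1::int) ^ card q)) = _\<close>
    unfolding X_def[symmetric] by (simp add: sum_negf)
qed

lemma sum_minus_one_power_card_subsets_pos_eq_0:
  assumes "finite S" "p \<in> pairings k S" "sJ S lam > 0"
  shows "(\<Sum>q | q \<subseteq> p \<and> (\<forall>B\<in>p - q. sJ B lam > 0). (-1::int) ^ card q) = 0"
proof -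
  have part: "partition_on S p" using assms(2) by (simp add: pairings_def)
  have "(\<Sum>B\<in>p. sJ B lam) > 0" using sJ_partition_on[OF part assms(1)] assms(3) by simp
  then obtain B\<^sub>0 where "B\<^sub>0 \<in> p" "sJ B\<^sub>0 lam > 0" by (metis not_le sum_nonpos)
  then show ?thesis
    using sum_minus_one_power_card_subsets_eq_0[OF finite_elements[OF assms(1) part], of B\<^sub>0 "\<lambda>B. sJ B lam > 0"]
    by simp
qed

lemma sum_pairing_pairs_reindex:
  assumes "finite S" "k \<le> 1"
  shows "(\<Sum>(I, q, r) \<in> Sigma {I. I \<subseteq> S \<and> card_parity I \<le> k}
            (\<lambda>I. pairings (card_parity I) I \<times> pos_pairings lam (k - card_parity I) (S - I)). f q (r \<union> q))
         = (\<Sum>(p, q) \<in> Sigma (pairings k S) (\<lambda>p. {q. q \<subseteq> p \<and> (\<forall>B\<in>p - q. sJ B lam > 0)}). f q p)"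
proof (rule sum.reindex_bij_witness[where j = "\<lambda>(I, q, r). (r \<union> q, q)" and i = "\<lambda>(p, q). (\<Union>q, q, p - q)"])
  fix a assume a: "a \<in> Sigma {I. I \<subseteq> S \<and> card_parity I \<le> k}
                     (\<lambda>I. pairings (card_parity I) I \<times> pos_pairings lam (k - card_parity I) (S - I))"
  then obtain I q r where a_eq: "a = (I, q, r)" and I: "I \<subseteq> S" "card_parity I \<le> k"
    and q: "q \<in> pairings (card_parity I) I" and r: "r \<in> pos_pairings lam (k - card_parity I) (S - I)"
    by auto
  have r': "r \<in> pairings (k - card_parity I) (S - I)" using r by (simp add: pos_pairings_def)
  have glued: "r \<union> q \<in> pairings k S" "r \<inter> q = {}" using pairings_Un[OF assms(1) I q r'] by auto
  have "\<Union>q = I" using q by (auto simp: pairings_def partition_on_def)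
  moreover have "(r \<union> q) - q = r" using glued(2) by auto
  ultimately show "(\<lambda>(p, q). (\<Union>q, q, p - q)) ((\<lambda>(I, q, r). (r \<union> q, q)) a) = a"
    unfolding a_eq by simp
  show "(\<lambda>(I, q, r). (r \<union> q, q)) a
          \<in> Sigma (pairings k S) (\<lambda>p. {q. q \<subseteq> p \<and> (\<forall>B\<in>p - q. sJ B lam > 0)})"
    using glued r \<open>(r \<union> q) - q = r\<close> unfolding a_eq pos_pairings_def by auto
  show "(case (\<lambda>(I, q, r). (r \<union> q, q)) a of (p, q) \<Rightarrow> f q p) = (case a of (I, q, r) \<Rightarrow> f q (r \<union> q))"
    unfolding a_eq by simp
next
  fix b assume b: "b \<in> Sigma (pairings k S) (\<lambda>p. {q. q \<subseteq> p \<and> (\<forall>B\<in>p - q. sJ B lam > 0)})"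
  then obtain p q where b_eq: "b = (p, q)" and p: "p \<in> pairings k S" and q: "q \<subseteq> p"
    and pos: "\<forall>B\<in>p - q. sJ B lam > 0"
    by auto
  show "(\<lambda>(I, q, r). (r \<union> q, q)) ((\<lambda>(p, q). (\<Union>q, q, p - q)) b) = b"
    unfolding b_eq using q by auto
  show "(\<lambda>(p, q). (\<Union>q, q, p - q)) b \<in> Sigma {I. I \<subseteq> S \<and> card_parity I \<le> k}
          (\<lambda>I. pairings (card_parity I) I \<times> pos_pairings lam (k - card_parity I) (S - I))"
    using pairings_split[OF assms(1) p q assms(2)] pos unfolding b_eq pos_pairings_def by simp
qed

lemma convolution_term_eq:
  assumes "finite S" "I \<subseteq> S" "card_parity I \<le> k" "k \<le> 1"
  shows "(-1::int) ^ crossings (S - I) I * eps_block I * pairing_sum lam (k - card_parity I) (S - I)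
           = (-1) ^ card S * (\<Sum>(q, r) \<in> pairings (card_parity I) I \<times> pos_pairings lam (k - card_parity I) (S - I).
                                 (-1) ^ card q * partition_sign (r \<union> q))"
proof -
  have fin: "finite I" "finite (S - I)" using assms(1,2) finite_subset by auto
  have sign_Un: "partition_sign (r \<union> q) = partition_sign r * partition_sign q * (-1) ^ crossings (S - I) I"
    if q: "q \<in> pairings (card_parity I) I" and r: "r \<in> pos_pairings lam (k - card_parity I) (S - I)" for q r
  proof (rule partition_sign_Un)
    have r': "r \<in> pairings (k - card_parity I) (S - I)" using r by (simp add: pos_pairings_def)
    show "partition_on (S - I) r" "partition_on I q" using q r' by (simp_all add: pairings_def)
    show "odd_blocks (r \<union> q) \<le> 1"
      using pairings_Un[OF assms(1-3) q r'] assms(4) by (simp add: pairings_def)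
  qed (use fin in auto)
  have "card S = card (S - I) + card I" using assms(1,2) fin(1) by (simp add: card_Diff_subset card_mono)
  then have "(-1::int) ^ crossings (S - I) I * eps_block I * pairing_sum lam (k - card_parity I) (S - I)
      = (-1) ^ card S * (\<Sum>q\<in>pairings (card_parity I) I. \<Sum>r\<in>pos_pairings lam (k - card_parity I) (S - I).
           (-1) ^ card q * (partition_sign r * partition_sign q * (-1) ^ crossings (S - I) I))"
    unfolding eps_block_eq_sum_pairings[OF fin(1)] pairing_sum_def
    by (simp add: power_add sum_distrib_left sum_distrib_right algebra_simps)
  also have "\<dots> = (-1) ^ card S * (\<Sum>(q, r) \<in> pairings (card_parity I) I \<times> pos_pairings lam (k - card_parity I) (S - I).
           (-1) ^ card q * (partition_sign r * partition_sign q * (-1) ^ crossings (S - I) I))"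
    by (simp add: sum.cartesian_product)
  also have "\<dots> = (-1) ^ card S * (\<Sum>(q, r) \<in> pairings (card_parity I) I \<times> pos_pairings lam (k - card_parity I) (S - I).
                                 (-1) ^ card q * partition_sign (r \<union> q))"
    using sign_Un by (intro arg_cong[where f = "\<lambda>x. (-1) ^ card S * x"] sum.cong) auto
  finally show ?thesis .
qed

text \<open>After expanding \<open>eps_block\<close>, the pairs (pairing of \<open>I\<close>, positive pairing of \<open>S - I\<close>) are
  regrouped by their union \<open>p\<close>, which leaves a vanishing alternating sum over subsets of \<open>p\<close>.\<close>
lemma pairing_sum_convolution_eq_0:
  assumes "finite S" "k \<le> 1" "sJ S lam > 0"
  shows "(\<Sum>I | I \<subseteq> S \<and> card_parity I \<le> k.
            (-1::int) ^ crossings (S - I) I * eps_block I * pairing_sum lam (k - card_parity I) (S - I)) = 0"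
proof -
  let ?A = "{I. I \<subseteq> S \<and> card_parity I \<le> k}"
  let ?Q = "\<lambda>I. pairings (card_parity I) I \<times> pos_pairings lam (k - card_parity I) (S - I)"
  let ?X = "\<lambda>p. {q. q \<subseteq> p \<and> (\<forall>B\<in>p - q. sJ B lam > 0)}"
  have finite_A: "finite ?A" by (rule finite_subset[of _ "Pow S"]) (use assms(1) in auto)
  have finite_Q: "finite (?Q I)" if "I \<in> ?A" for I
  proof -
    have "finite I" using that assms(1) finite_subset by auto
    then show ?thesis using finite_pairings finite_pos_pairings assms(1) by auto
  qed
  have finite_X: "finite (?X p)" if "p \<in> pairings k S" for p
    using finite_elements[OF assms(1), of p] that by (auto simp: pairings_def)
  have "(\<Sum>I\<in>?A. (-1::int) ^ crossings (S - I) I * eps_block I * pairing_sum lam (k - card_parity I) (S - I))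
          = (-1) ^ card S * (\<Sum>I\<in>?A. \<Sum>(q, r)\<in>?Q I. (-1) ^ card q * partition_sign (r \<union> q))"
    using convolution_term_eq[OF assms(1) _ _ assms(2)] by (simp add: sum_distrib_left)
  also have "(\<Sum>I\<in>?A. \<Sum>(q, r)\<in>?Q I. (-1::int) ^ card q * partition_sign (r \<union> q))
               = (\<Sum>(I, q, r)\<in>Sigma ?A ?Q. (-1) ^ card q * partition_sign (r \<union> q))"
    using finite_A finite_Q by (subst sum.Sigma) auto
  also have "\<dots> = (\<Sum>(p, q)\<in>Sigma (pairings k S) ?X. (-1) ^ card q * partition_sign p)"
    by (rule sum_pairing_pairs_reindex[OF assms(1,2), where f = "\<lambda>q p. (-1::int) ^ card q * partition_sign p"])
  also have "\<dots> = (\<Sum>p\<in>pairings k S. \<Sum>q\<in>?X p. (-1) ^ card q * partition_sign p)"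
    using finite_X finite_pairings[OF assms(1)] by (subst sum.Sigma) auto
  also have "\<dots> = (\<Sum>p\<in>pairings k S. partition_sign p * (\<Sum>q\<in>?X p. (-1) ^ card q))"
    by (simp add: sum_distrib_left mult.commute)
  also have "\<dots> = 0"
    using sum_minus_one_power_card_subsets_pos_eq_0[OF assms(1) _ assms(3)] by simp
  finally show ?thesis by simp
qed

section \<open>Ordered partitions with positive prefix sums\<close>

definition ordered_partitions :: "nat set \<Rightarrow> nat set list set" where
  "ordered_partitions S = {P. partition_on S (set P) \<and> distinct P}"

definition prefix_positive :: "(nat \<Rightarrow> real) \<Rightarrow> nat set list \<Rightarrow> bool" where
  "prefix_positive lam P \<longleftrightarrow> (\<forall>i\<in>{1..length P}. sum_list (map (\<lambda>I. sJ I lam) (take i P)) > 0)"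

definition pos_ordered_partitions :: "(nat \<Rightarrow> real) \<Rightarrow> nat \<Rightarrow> nat set \<Rightarrow> nat set list set" where
  "pos_ordered_partitions lam k S
     = {P \<in> ordered_partitions S. prefix_positive lam P \<and> odd_blocks (set P) = k}"

definition weight :: "nat set list \<Rightarrow> int" where
  "weight P = (-1) ^ length P * block_sign P * eps' P"

lemma finite_pos_ordered_partitions: "finite S \<Longrightarrow> finite (pos_ordered_partitions lam k S)"
  by (rule finite_subset[OF _ finite_subset_distinct[of "Pow S"]])
    (auto simp: pos_ordered_partitions_def ordered_partitions_def partition_on_def)

lemma sum_list_sJ_blocks:
  assumes "wf_blocks P"
  shows "sum_list (map (\<lambda>I. sJ I lam) P) = sJ (\<Union>(set P)) lam"
proof -
  have "\<forall>A\<in>set P. finite A" "\<forall>A\<in>set P. \<forall>B\<in>set P. A \<noteq> B \<longrightarrow> A \<inter> B = {}"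
    using assms unfolding wf_blocks_def pairwise_def disjnt_def by auto
  then have "sum lam (\<Union>(set P)) = (\<Sum>I\<in>set P. sum lam I)" by (simp add: sum.Union_disjoint)
  moreover have "distinct P" using assms unfolding wf_blocks_def by simp
  ultimately show ?thesis unfolding sJ_def by (simp add: sum.distinct_set_conv_list)
qed

lemma prefix_positive_snoc:
  "prefix_positive lam (P @ [I])
     \<longleftrightarrow> prefix_positive lam P \<and> sum_list (map (\<lambda>I. sJ I lam) (P @ [I])) > 0"
proof -
  have "{1..length (P @ [I])} = insert (Suc (length P)) {1..length P}" by auto
  moreover have "take i (P @ [I]) = take i P" if "i \<in> {1..length P}" for i using that by simp
  ultimately show ?thesis unfolding prefix_positive_def by auto
qed

lemma eps'_snoc: "eps' (P @ [I]) = eps' P * eps_block I"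
proof -
  have "even (\<Sum>J\<leftarrow>P. card J * (card J - 1))" by (induction P) auto
  then have "(\<Sum>J\<leftarrow>P @ [I]. card J * (card J - 1)) div 2
               = (\<Sum>J\<leftarrow>P. card J * (card J - 1)) div 2 + card I * (card I - 1) div 2"
    by (auto elim!: evenE)
  then show ?thesis unfolding eps'_def eps_block_def by (simp add: power_add)
qed

lemma pos_ordered_partitions_nonpos:
  assumes "finite S" "S \<noteq> {}" "\<not> sJ S lam > 0"
  shows "pos_ordered_partitions lam k S = {}"
proof (rule ccontr)
  assume "pos_ordered_partitions lam k S \<noteq> {}"
  then obtain P where part: "partition_on S (set P)" "distinct P" and pos: "prefix_positive lam P"
    by (auto simp: pos_ordered_partitions_def ordered_partitions_def)
  have "P \<noteq> []" using part(1) assms(2) by (auto simp: partition_on_def)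
  then have "sum_list (map (\<lambda>I. sJ I lam) P) > 0"
    using pos unfolding prefix_positive_def by (metis atLeastAtMost_iff le_refl length_greater_0_conv less_one not_le take_all)
  moreover have "sum_list (map (\<lambda>I. sJ I lam) P) = sJ S lam"
    using sum_list_sJ_blocks[OF wf_blocks_ordering[OF part assms(1)]] partition_onD1[OF part(1)] by simp
  ultimately show False using assms(3) by simp
qed

lemma pos_pairings_nonpos:
  assumes "finite S" "S \<noteq> {}" "\<not> sJ S lam > 0"
  shows "pos_pairings lam k S = {}"
proof (rule ccontr)
  assume "pos_pairings lam k S \<noteq> {}"
  then obtain p where part: "partition_on S p" and pos: "\<forall>B\<in>p. sJ B lam > 0"
    by (auto simp: pos_pairings_def pairings_def)
  have "p \<noteq> {}" using part assms(2) by (auto simp: partition_on_def)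
  then have "(\<Sum>B\<in>p. sJ B lam) > 0" using pos finite_elements[OF assms(1) part] by (intro sum_pos) auto
  then show False using sJ_partition_on[OF part assms(1)] assms(3) by simp
qed

lemma weight_snoc:
  assumes "wf_blocks (P @ [I])"
  shows "weight (P @ [I]) = - ((-1) ^ crossings (\<Union>(set P)) I * eps_block I * weight P)"
  unfolding weight_def using block_sign_append[OF assms] eps'_snoc[of P I] by simp

lemma snoc_in_pos_ordered_partitions:
  assumes "finite S" "sJ S lam > 0" "I \<subseteq> S" "I \<noteq> {}" "card_parity I \<le> k"
    and "P \<in> pos_ordered_partitions lam (k - card_parity I) (S - I)"
  shows "P @ [I] \<in> pos_ordered_partitions lam k S"
proof -
  have part: "partition_on (S - I) (set P)" "distinct P" and pos: "prefix_positive lam P"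
    and odd: "odd_blocks (set P) = k - card_parity I"
    using assms(6) by (auto simp: pos_ordered_partitions_def ordered_partitions_def)
  have u: "partition_on (S - I \<union> I) (set P \<union> {I})" "set P \<inter> {I} = {}"
    using partition_on_Un[OF part(1) partition_on_space[OF assms(4)]] by auto
  then have part': "partition_on S (set (P @ [I]))" "distinct (P @ [I])"
    using assms(3) part(2) by (auto simp: Un_absorb2)
  have "sum_list (map (\<lambda>I. sJ I lam) (P @ [I])) = sJ S lam"
    using sum_list_sJ_blocks[OF wf_blocks_ordering[OF part' assms(1)]] partition_onD1[OF part'(1)] by simp
  moreover have "odd_blocks (set (P @ [I])) = k"
    using odd_blocks_insert[of "set P" I] u(2) odd assms(5) by auto
  ultimately show ?thesis
    using part' pos assms(2)
    by (simp add: pos_ordered_partitions_def ordered_partitions_def prefix_positive_snoc)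
qed

lemma butlast_in_pos_ordered_partitions:
  assumes "Q \<in> pos_ordered_partitions lam k S" "Q \<noteq> []"
  shows "last Q \<subseteq> S" "last Q \<noteq> {}" "card_parity (last Q) \<le> k"
    "butlast Q \<in> pos_ordered_partitions lam (k - card_parity (last Q)) (S - last Q)"
proof -
  define I P where "I = last Q" and "P = butlast Q"
  have Q_eq: "Q = P @ [I]" unfolding I_def P_def using assms(2) by simp
  have part: "partition_on S (set Q)" "distinct Q" and pos: "prefix_positive lam Q"
    and odd: "odd_blocks (set Q) = k"
    using assms(1) by (auto simp: pos_ordered_partitions_def ordered_partitions_def)
  have "I \<in> set Q" "I \<notin> set P" "set P = set Q - {I}" using part(2) unfolding Q_eq by auto
  then show "last Q \<subseteq> S" "last Q \<noteq> {}" using part(1) unfolding I_def partition_on_def by auto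
  have "partition_on (S - \<Union>{I}) (set Q - {I})"
    using partition_on_subset(2)[OF part(1), of "{I}"] \<open>I \<in> set Q\<close> by simp
  then have "partition_on (S - I) (set P)" using \<open>set P = set Q - {I}\<close> by simp
  moreover have "odd_blocks (set Q) = card_parity I + odd_blocks (set P)"
    using odd_blocks_insert[of "set P" I] \<open>I \<notin> set P\<close> unfolding Q_eq by simp
  ultimately show "card_parity (last Q) \<le> k"
    "butlast Q \<in> pos_ordered_partitions lam (k - card_parity (last Q)) (S - last Q)"
    using odd pos part(2) unfolding Q_eq I_def[symmetric] P_def[symmetric]
    by (auto simp: pos_ordered_partitions_def ordered_partitions_def prefix_positive_snoc)
qed

lemma sum_pos_ordered_partitions_last_block:
  assumes "finite S" "S \<noteq> {}" "sJ S lam > 0"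
  shows "(\<Sum>(I, P) \<in> Sigma {I. I \<subseteq> S \<and> I \<noteq> {} \<and> card_parity I \<le> k}
             (\<lambda>I. pos_ordered_partitions lam (k - card_parity I) (S - I)).
            (-1::int) ^ crossings (S - I) I * eps_block I * weight P)
         = (\<Sum>P\<in>pos_ordered_partitions lam k S. - weight P)"
proof (rule sum.reindex_bij_witness[where j = "\<lambda>(I, P). P @ [I]" and i = "\<lambda>P. (last P, butlast P)"])
  fix a assume "a \<in> Sigma {I. I \<subseteq> S \<and> I \<noteq> {} \<and> card_parity I \<le> k}
                    (\<lambda>I. pos_ordered_partitions lam (k - card_parity I) (S - I))"
  then obtain I P where a_eq: "a = (I, P)" and I: "I \<subseteq> S" "I \<noteq> {}" "card_parity I \<le> k"
    and P: "P \<in> pos_ordered_partitions lam (k - card_parity I) (S - I)"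
    by auto
  show "(\<lambda>P. (last P, butlast P)) ((\<lambda>(I, P). P @ [I]) a) = a" unfolding a_eq by simp
  have PI: "P @ [I] \<in> pos_ordered_partitions lam k S"
    using snoc_in_pos_ordered_partitions[OF assms(1,3) I P] .
  then show "(\<lambda>(I, P). P @ [I]) a \<in> pos_ordered_partitions lam k S" unfolding a_eq by simp
  have "wf_blocks (P @ [I])"
    using PI assms(1) by (auto simp: pos_ordered_partitions_def ordered_partitions_def intro: wf_blocks_ordering)
  moreover have "\<Union>(set P) = S - I"
    using P partition_onD1 by (auto simp: pos_ordered_partitions_def ordered_partitions_def)
  ultimately show "- weight ((\<lambda>(I, P). P @ [I]) a)
               = (case a of (I, P) \<Rightarrow> (-1) ^ crossings (S - I) I * eps_block I * weight P)"
    unfolding a_eq by (simp add: weight_snoc)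
next
  fix Q assume Q: "Q \<in> pos_ordered_partitions lam k S"
  then have "Q \<noteq> []"
    using assms(2) by (auto simp: pos_ordered_partitions_def ordered_partitions_def partition_on_def)
  then show "(\<lambda>(I, P). P @ [I]) ((\<lambda>P. (last P, butlast P)) Q) = Q" by simp
  show "(\<lambda>P. (last P, butlast P)) Q \<in> Sigma {I. I \<subseteq> S \<and> I \<noteq> {} \<and> card_parity I \<le> k}
                     (\<lambda>I. pos_ordered_partitions lam (k - card_parity I) (S - I))"
    using butlast_in_pos_ordered_partitions[OF Q \<open>Q \<noteq> []\<close>] by simp
qed

lemma pairing_sum_recursion:
  assumes "finite S" "k \<le> 1" "sJ S lam > 0"
  shows "(\<Sum>I | I \<subseteq> S \<and> I \<noteq> {} \<and> card_parity I \<le> k.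
            (-1::int) ^ crossings (S - I) I * eps_block I * pairing_sum lam (k - card_parity I) (S - I))
         = - pairing_sum lam k S"
proof -
  let ?A = "{I. I \<subseteq> S \<and> I \<noteq> {} \<and> card_parity I \<le> k}"
  have "finite ?A" by (rule finite_subset[of _ "Pow S"]) (use assms(1) in auto)
  moreover have "{I. I \<subseteq> S \<and> card_parity I \<le> k} = insert {} ?A" by (auto simp: card_parity_def)
  ultimately show ?thesis
    using pairing_sum_convolution_eq_0[OF assms] by (simp add: card_parity_def eps_block_def)
qed

lemma sum_weight_pos_ordered_partitions_empty:
  "(\<Sum>P\<in>pos_ordered_partitions lam k {}. weight P) = pairing_sum lam k {}"
proof -
  have "pos_ordered_partitions lam k {} = (if k = 0 then {[]} else {})"
    and "pos_pairings lam k {} = (if k = 0 then {{}} else {})"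
    by (auto simp: pos_ordered_partitions_def ordered_partitions_def partition_on_empty
        prefix_positive_def odd_blocks_def pos_pairings_def pairings_def)
  then show ?thesis by (simp add: pairing_sum_def weight_def eps'_def partition_sign_empty)
qed

lemma sum_weight_pos_ordered_partitions:
  assumes "finite S" "k \<le> 1"
  shows "(\<Sum>P\<in>pos_ordered_partitions lam k S. weight P) = pairing_sum lam k S"
  using assms
proof (induction "card S" arbitrary: S k rule: less_induct)
  case less
  let ?A = "{I. I \<subseteq> S \<and> I \<noteq> {} \<and> card_parity I \<le> k}"
  let ?c = "\<lambda>I. (-1::int) ^ crossings (S - I) I * eps_block I"
  consider "S = {}" | "S \<noteq> {}" "\<not> sJ S lam > 0" | "S \<noteq> {}" "sJ S lam > 0" by blast
  then show ?case
  proof cases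
    case 1
    then show ?thesis using sum_weight_pos_ordered_partitions_empty by simp
  next
    case 2
    then show ?thesis
      using pos_ordered_partitions_nonpos[OF less.prems(1) 2] pos_pairings_nonpos[OF less.prems(1) 2]
      by (simp add: pairing_sum_def)
  next
    case 3
    have finite_A: "finite ?A" by (rule finite_subset[of _ "Pow S"]) (use less.prems in auto)
    have IH: "(\<Sum>P\<in>pos_ordered_partitions lam (k - card_parity I) (S - I). weight P)
                = pairing_sum lam (k - card_parity I) (S - I)" if "I \<in> ?A" for I
    proof (rule less.hyps)
      show "card (S - I) < card S" using that less.prems by (intro psubset_card_mono) auto
    qed (use less.prems in auto)
    have "(\<Sum>P\<in>pos_ordered_partitions lam k S. - weight P)
            = (\<Sum>I\<in>?A. ?c I * (\<Sum>P\<in>pos_ordered_partitions lam (k - card_parity I) (S - I). weight P))"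
      using sum_pos_ordered_partitions_last_block[OF less.prems(1) 3, of k, symmetric]
        finite_A finite_pos_ordered_partitions less.prems(1)
      by (subst (asm) sum.Sigma[symmetric]) (auto simp: sum_distrib_left)
    also have "\<dots> = (\<Sum>I\<in>?A. ?c I * pairing_sum lam (k - card_parity I) (S - I))"
      using IH by simp
    also have "\<dots> = - pairing_sum lam k S"
      using pairing_sum_recursion[OF less.prems 3(2)] by simp
    finally show ?thesis by (simp add: sum_negf)
  qed
qed

lemma P0ord_lam_eq: "P0ord_lam n lam = pos_ordered_partitions lam 0 {1..n} \<union> pos_ordered_partitions lam 1 {1..n}"
  unfolding P0ord_lam_def Pord_def P0ord_def P0_def part_def ordpart_def pos_ordered_partitions_def
    ordered_partitions_def prefix_positive_def odd_blocks_def
  by (auto simp: le_Suc_eq)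

lemma P0le2_eq: "P0le2 n lam = pos_pairings lam 0 {1..n} \<union> pos_pairings lam 1 {1..n}"
  unfolding P0le2_def P0_def Plam_def part_def pos_pairings_def pairings_def odd_blocks_def
  by auto

lemma eps_part_eq_partition_sign:
  assumes "p \<in> P0le2 n lam"
  shows "eps_part n p = partition_sign p"
proof -
  have part: "partition_on {1..n} p" and odd: "odd_blocks p \<le> 1"
    using assms unfolding P0le2_def P0_def part_def odd_blocks_def by auto
  define Q where "Q = (SOME P. P \<in> ordpart n \<and> set P = p)"
  obtain xs where "set xs = p" "distinct xs"
    using finite_distinct_list[OF finite_elements[OF _ part]] by auto
  then have "\<exists>P. P \<in> ordpart n \<and> set P = p" using part unfolding ordpart_def by auto
  then have Q: "distinct Q" "set Q = p"
    using someI_ex[of "\<lambda>P. P \<in> ordpart n \<and> set P = p"] unfolding Q_def ordpart_def by auto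
  have "\<Union>(set Q) = {1..n}" using Q(2) partition_onD1[OF part] by simp
  moreover have "wf_blocks Q" using wf_blocks_ordering[of "{1..n}" Q] Q part by simp
  ultimately have "epsP Q = block_sign Q" using epsP_eq_block_sign by blast
  then show ?thesis
    unfolding eps_part_def Q_def[symmetric] using partition_sign_eq_block_sign[OF part _ odd Q] by simp
qed

lemma summand_eq_weight:
  assumes "P \<in> P0ord_lam n lam"
  shows "(-1) ^ length P * epsP P * eps' P = weight P"
proof -
  have part: "partition_on {1..n} (set P)" "distinct P"
    using assms by (auto simp: P0ord_lam_def Pord_def ordpart_def)
  have "\<Union>(set P) = {1..n}" using partition_onD1[OF part(1)] by simp
  moreover have "wf_blocks P" using wf_blocks_ordering[OF part] by simp
  ultimately have "epsP P = block_sign P" using epsP_eq_block_sign by blast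
  then show ?thesis by (simp add: weight_def)
qed

lemma sum_weight_P0ord_lam:
  "(\<Sum>P\<in>P0ord_lam n lam. weight P) = pairing_sum lam 0 {1..n} + pairing_sum lam 1 {1..n}"
proof -
  have "pos_ordered_partitions lam 0 {1..n} \<inter> pos_ordered_partitions lam 1 {1..n} = {}"
    by (auto simp: pos_ordered_partitions_def)
  then show ?thesis unfolding P0ord_lam_eq
    by (simp add: sum.union_disjoint finite_pos_ordered_partitions sum_weight_pos_ordered_partitions)
qed

lemma pairing_sums_eq_sum_P0le2:
  "pairing_sum lam 0 {1..n} + pairing_sum lam 1 {1..n} = (-1) ^ n * (\<Sum>p\<in>P0le2 n lam. partition_sign p)"
proof -
  have "pos_pairings lam 0 {1..n} \<inter> pos_pairings lam 1 {1..n} = {}"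
    by (auto simp: pos_pairings_def pairings_def)
  then show ?thesis unfolding P0le2_eq pairing_sum_def
    by (simp add: sum.union_disjoint finite_pos_pairings algebra_simps)
qed

theorem mainTheorem8:
  fixes n :: nat and lam :: "nat \<Rightarrow> real"
  shows "(\<Sum>P\<in>P0ord_lam n lam. (-1) ^ length P * epsP P * eps' P)
       = (-1) ^ n * (\<Sum>p\<in>P0le2 n lam. eps_part n p)"
proof -
  have "(\<Sum>P\<in>P0ord_lam n lam. (-1) ^ length P * epsP P * eps' P) = (\<Sum>P\<in>P0ord_lam n lam. weight P)"
    using summand_eq_weight by simp
  also have "\<dots> = (-1) ^ n * (\<Sum>p\<in>P0le2 n lam. partition_sign p)"
    using sum_weight_P0ord_lam pairing_sums_eq_sum_P0le2 by simp
  also have "\<dots> = (-1) ^ n * (\<Sum>p\<in>P0le2 n lam. eps_part n p)"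
    using eps_part_eq_partition_sign by simp
  finally show ?thesis .
qed

end
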